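(* Fix $\delta\in(0,1)$ and $\gamma'>0$. For all sufficiently large $n$ the following holds. Let $G=(X\cup Y,E)$ be a $d$-regular bipartite graph on $2n$ vertices with $d=\lfloor\delta n\rfloor$, let $t\le\log^4 n$, let $A\in\mathcal G(w,t)$, and let $(S,T)$ be a $\gamma'$-container for $A$. Then $|S|\le |T|$.
   Context: $N(S)$ is the neighbourhood of $S$; $d_S(v)$ is the number of neighbours of $v$ in $S$. A polymer is a subset of $X$ connected in the square $G^2$ of $G$. The closure of $A\subseteq X$ is $[A]:=\{x\in X: N(x)\subseteq N(A)\}$. $\mathcal G(w,t):=\{A\subseteq X \text{ polymer} : |N(A)|=w,\ |N(A)|-|[A]|=t\}$. For $A\subseteq X$ write $W=N(A)$ and $W_s=\{y\in W: d_A(y)\ge s\}$. A pair $(S,T)\in 2^X\times 2^Y$ is a $\gamma'$-container for $A$ (with $t=|N(A)|-|[A]|$) if (i) $S\supseteq[A]$ and $W_{d/2}\subseteq T\subseteq W$; (ii) $d_{Y\setminus T}(v)\le\gamma' t$ for every $v\in S$; (iii) $d_S(v)\le \gamma' t$ for every $v\in Y\setminus T$. *)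

theory Defs
  imports Complex_Main
begin

definition bipartite_graph :: "'a set \<Rightarrow> 'a set \<Rightarrow> ('a \<Rightarrow> 'a \<Rightarrow> bool) \<Rightarrow> bool" where
  "bipartite_graph X Y E \<longleftrightarrow> finite X \<and> finite Y \<and> X \<inter> Y = {} \<and>
     (\<forall>u v. E u v \<longrightarrow> E v u) \<and>
     (\<forall>u v. E u v \<longrightarrow> (u \<in> X \<and> v \<in> Y) \<or> (u \<in> Y \<and> v \<in> X))"

definition nbhd :: "('a \<Rightarrow> 'a \<Rightarrow> bool) \<Rightarrow> 'a set \<Rightarrow> 'a set" where
  "nbhd E S = {v. \<exists>u\<in>S. E u v}"

definition deg_in :: "('a \<Rightarrow> 'a \<Rightarrow> bool) \<Rightarrow> 'a set \<Rightarrow> 'a \<Rightarrow> nat" where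
  "deg_in E S v = card {u\<in>S. E v u}"

definition regular :: "'a set \<Rightarrow> 'a set \<Rightarrow> ('a \<Rightarrow> 'a \<Rightarrow> bool) \<Rightarrow> nat \<Rightarrow> bool" where
  "regular X Y E d \<longleftrightarrow> (\<forall>v\<in>X \<union> Y. card (nbhd E {v}) = d)"

definition sq_adj :: "('a \<Rightarrow> 'a \<Rightarrow> bool) \<Rightarrow> 'a \<Rightarrow> 'a \<Rightarrow> bool" where
  "sq_adj E u v \<longleftrightarrow> u \<noteq> v \<and> (E u v \<or> (\<exists>z. E u z \<and> E z v))"

definition polymer :: "'a set \<Rightarrow> ('a \<Rightarrow> 'a \<Rightarrow> bool) \<Rightarrow> 'a set \<Rightarrow> bool" where
  "polymer X E A \<longleftrightarrow> A \<subseteq> X \<and> A \<noteq> {} \<and>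
     (\<forall>u\<in>A. \<forall>v\<in>A. (\<lambda>x y. x \<in> A \<and> y \<in> A \<and> sq_adj E x y)\<^sup>*\<^sup>* u v)"

definition closure_set :: "'a set \<Rightarrow> ('a \<Rightarrow> 'a \<Rightarrow> bool) \<Rightarrow> 'a set \<Rightarrow> 'a set" where
  "closure_set X E A = {x\<in>X. nbhd E {x} \<subseteq> nbhd E A}"

definition polyfam :: "'a set \<Rightarrow> ('a \<Rightarrow> 'a \<Rightarrow> bool) \<Rightarrow> nat \<Rightarrow> int \<Rightarrow> 'a set set" where
  "polyfam X E w t = {A. polymer X E A \<and> card (nbhd E A) = w \<and>
      int (card (nbhd E A)) - int (card (closure_set X E A)) = t}"

definition W_s :: "('a \<Rightarrow> 'a \<Rightarrow> bool) \<Rightarrow> 'a set \<Rightarrow> real \<Rightarrow> 'a set" where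
  "W_s E A s = {y\<in>nbhd E A. real (deg_in E A y) \<ge> s}"

definition container ::
  "'a set \<Rightarrow> 'a set \<Rightarrow> ('a \<Rightarrow> 'a \<Rightarrow> bool) \<Rightarrow> nat \<Rightarrow> real \<Rightarrow> 'a set \<Rightarrow> 'a set \<Rightarrow> 'a set \<Rightarrow> bool" where
  "container X Y E d \<gamma> A S T \<longleftrightarrow>
     (let t = real_of_int (int (card (nbhd E A)) - int (card (closure_set X E A))) in
      S \<subseteq> X \<and> T \<subseteq> Y \<and>
      closure_set X E A \<subseteq> S \<and> W_s E A (real d / 2) \<subseteq> T \<and> T \<subseteq> nbhd E A \<and>
      (\<forall>v\<in>S. real (deg_in E (Y - T) v) \<le> \<gamma> * t) \<and>
      (\<forall>v\<in>Y - T. real (deg_in E S v) \<le> \<gamma> * t))"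

end

theory Submission
  imports Defs "HOL-Real_Asymp.Real_Asymp"
begin

text \<open>
  Put \<open>C = [A]\<close>, \<open>N = N(A)\<close> and \<open>t = |N| - |C|\<close>. Every vertex of \<open>C\<close> has all its \<open>d\<close>
  neighbours in \<open>N\<close>, so exactly \<open>d t\<close> edges join \<open>N\<close> to \<open>X - C\<close>. By the container
  conditions each vertex of \<open>S - C\<close> and each vertex of \<open>N - T\<close> sends at least \<open>d - \<gamma>' t\<close>
  of these edges, whence \<open>(|S - C| + |N - T|)(d - \<gamma>' t) \<le> d t\<close>. Since \<open>d \<approx> \<delta> n\<close> dwarfs
  \<open>\<gamma>' t (t + 1)\<close> for \<open>t \<le> log\<^sup>4 n\<close>, integrality gives \<open>|S - C| + |N - T| \<le> t\<close>, which is
  \<open>|S| \<le> |T|\<close>.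
\<close>

lemma deg_in_eq_sum: "finite P \<Longrightarrow> deg_in E P v = (\<Sum>u\<in>P. if E v u then 1 else 0)"
  unfolding deg_in_def card_eq_sum by (rule sum.inter_filter)

lemma sum_deg_in_swap:
  assumes "finite P" "finite Q" "\<And>u v. E u v \<Longrightarrow> E v u"
  shows "(\<Sum>y\<in>Q. deg_in E P y) = (\<Sum>x\<in>P. deg_in E Q x)"
proof -
  have "(\<Sum>y\<in>Q. deg_in E P y) = (\<Sum>y\<in>Q. \<Sum>x\<in>P. if E y x then 1 else 0)"
    using assms(1) by (simp add: deg_in_eq_sum)
  also have "\<dots> = (\<Sum>x\<in>P. \<Sum>y\<in>Q. if E y x then 1 else 0)"
    by (rule sum.swap)
  also have "\<dots> = (\<Sum>x\<in>P. \<Sum>y\<in>Q. if E x y then 1 else 0)"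
    using assms(3) by (intro sum.cong refl) metis
  also have "\<dots> = (\<Sum>x\<in>P. deg_in E Q x)"
    using assms(2) by (simp add: deg_in_eq_sum)
  finally show ?thesis .
qed

lemma deg_in_Un_disjoint:
  "finite P \<Longrightarrow> finite Q \<Longrightarrow> P \<inter> Q = {} \<Longrightarrow> deg_in E (P \<union> Q) v = deg_in E P v + deg_in E Q v"
  by (simp add: deg_in_eq_sum sum.union_disjoint)

lemma deg_in_mono: "P \<subseteq> Q \<Longrightarrow> finite Q \<Longrightarrow> deg_in E P v \<le> deg_in E Q v"
  unfolding deg_in_def by (rule card_mono) auto

lemma bipartite_graph_swap: "bipartite_graph X Y E \<Longrightarrow> bipartite_graph Y X E"
  unfolding bipartite_graph_def by blast

lemma regular_swap: "regular X Y E d \<Longrightarrow> regular Y X E d"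
  unfolding regular_def by blast

lemma bipartite_graph_finite: "bipartite_graph X Y E \<Longrightarrow> finite X \<and> finite Y"
  unfolding bipartite_graph_def by blast

lemma bipartite_graph_sym: "bipartite_graph X Y E \<Longrightarrow> E u v \<Longrightarrow> E v u"
  unfolding bipartite_graph_def by blast

lemma nbhd_subset_other_part: "bipartite_graph X Y E \<Longrightarrow> A \<subseteq> X \<Longrightarrow> nbhd E A \<subseteq> Y"
  unfolding bipartite_graph_def nbhd_def by blast

lemma deg_in_other_part:
  assumes "bipartite_graph X Y E" "regular X Y E d" "x \<in> X"
  shows "deg_in E Y x = d"
proof -
  have "{u\<in>Y. E x u} = nbhd E {x}"
    using assms(1,3) unfolding bipartite_graph_def nbhd_def by blast
  then show ?thesis
    using assms(2,3) unfolding regular_def deg_in_def by auto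
qed

lemma deg_in_split:
  assumes "bipartite_graph X Y E" "regular X Y E d" "x \<in> X" "T \<subseteq> Y"
  shows "deg_in E T x + deg_in E (Y - T) x = d"
proof -
  have "finite T" "finite (Y - T)"
    using bipartite_graph_finite[OF assms(1)] assms(4) finite_subset by auto
  moreover have "Y = T \<union> (Y - T)" using assms(4) by blast
  ultimately show ?thesis
    using deg_in_other_part[OF assms(1-3)] deg_in_Un_disjoint[of T "Y - T" E x] by auto
qed

text \<open>Counting the edges at \<open>N(A)\<close> once from each side gives \<open>e(N(A), X - [A]) = d t\<close>.\<close>

lemma sum_deg_in_outside_closure:
  assumes graph: "bipartite_graph X Y E" and reg: "regular X Y E d" and AX: "A \<subseteq> X"
  shows "(\<Sum>y\<in>nbhd E A. deg_in E (X - closure_set X E A) y) + d * card (closure_set X E A)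
           = d * card (nbhd E A)"
proof -
  define N where "N = nbhd E A"
  define C where "C = closure_set X E A"
  have NY: "N \<subseteq> Y" unfolding N_def using nbhd_subset_other_part[OF graph AX] .
  have CX: "C \<subseteq> X" unfolding C_def closure_set_def by auto
  have fN: "finite N" and fC: "finite C"
    using NY CX bipartite_graph_finite[OF graph] finite_subset by auto
  have "deg_in E N x = d" if "x \<in> C" for x
  proof -
    have "{u\<in>N. E x u} = {u\<in>Y. E x u}"
      using that NY CX nbhd_subset_other_part[OF graph, of "{x}"]
      unfolding C_def closure_set_def N_def nbhd_def by blast
    then show ?thesis
      using deg_in_other_part[OF graph reg] that CX unfolding deg_in_def by auto
  qed
  then have "(\<Sum>y\<in>N. deg_in E C y) = d * card C"
    using sum_deg_in_swap[OF fC fN bipartite_graph_sym[OF graph]] by simp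
  moreover have "deg_in E C y + deg_in E (X - C) y = d" if "y \<in> N" for y
    using deg_in_split[OF bipartite_graph_swap[OF graph] regular_swap[OF reg]] that NY CX by blast
  then have "(\<Sum>y\<in>N. deg_in E C y) + (\<Sum>y\<in>N. deg_in E (X - C) y) = d * card N"
    by (simp flip: sum.distrib)
  ultimately show ?thesis unfolding N_def C_def by linarith
qed

lemma container_deficit_bound:
  assumes graph: "bipartite_graph X Y E" and reg: "regular X Y E d" and AX: "A \<subseteq> X"
    and cont: "container X Y E d \<gamma> A S T"
  defines "N \<equiv> nbhd E A" and "C \<equiv> closure_set X E A"
  defines "t \<equiv> real (card N) - real (card C)"
  shows "real (card (S - C) + card (N - T)) * (real d - \<gamma> * t) \<le> real d * t"
proof -
  have SX: "S \<subseteq> X" and TY: "T \<subseteq> Y" and CS: "C \<subseteq> S" and TN: "T \<subseteq> N"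
    and S_sparse: "\<forall>v\<in>S. real (deg_in E (Y - T) v) \<le> \<gamma> * t"
    and outside_T_sparse: "\<forall>v\<in>Y - T. real (deg_in E S v) \<le> \<gamma> * t"
    using cont unfolding container_def Let_def t_def N_def C_def by auto
  have NY: "N \<subseteq> Y" unfolding N_def using nbhd_subset_other_part[OF graph AX] .
  have fX: "finite X" and fS: "finite S" and fN: "finite N" and fT: "finite T"
    using SX NY TN bipartite_graph_finite[OF graph] finite_subset by metis+
  define R where "R = X - C"
  have "real (\<Sum>y\<in>N. deg_in E R y) + real (d * card C) = real (d * card N)"
    using sum_deg_in_outside_closure[OF graph reg AX]
    unfolding R_def N_def C_def by (metis of_nat_add)
  then have edges_into_R: "real (\<Sum>y\<in>N. deg_in E R y) = real d * t"
    unfolding t_def by (simp add: algebra_simps)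
  have "real (card (S - C)) * (real d - \<gamma> * t) \<le> real (\<Sum>x\<in>S - C. deg_in E T x)"
  proof -
    have "real d - \<gamma> * t \<le> real (deg_in E T x)" if "x \<in> S - C" for x
      using deg_in_split[OF graph reg, of x T] S_sparse that SX TY by force
    then have "(\<Sum>x\<in>S - C. real d - \<gamma> * t) \<le> (\<Sum>x\<in>S - C. real (deg_in E T x))"
      by (rule sum_mono)
    then show ?thesis by simp
  qed
  also have "(\<Sum>x\<in>S - C. deg_in E T x) = (\<Sum>y\<in>T. deg_in E (S - C) y)"
    using sum_deg_in_swap[of T "S - C" E] fS fT bipartite_graph_sym[OF graph] by simp
  also have "\<dots> \<le> (\<Sum>y\<in>T. deg_in E R y)"
    unfolding R_def using SX fX by (intro sum_mono deg_in_mono) auto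
  finally have from_S: "real (card (S - C)) * (real d - \<gamma> * t) \<le> real (\<Sum>y\<in>T. deg_in E R y)"
    by simp
  have "real d - \<gamma> * t \<le> real (deg_in E R y)" if "y \<in> N - T" for y
  proof -
    have "y \<in> Y" using that NY by blast
    then have "deg_in E C y + deg_in E R y = d"
      unfolding R_def using deg_in_split[OF bipartite_graph_swap[OF graph] regular_swap[OF reg]]
        CS SX by blast
    moreover have "deg_in E C y \<le> deg_in E S y" using CS fS by (rule deg_in_mono)
    moreover have "real (deg_in E S y) \<le> \<gamma> * t" using outside_T_sparse that \<open>y \<in> Y\<close> by blast
    ultimately show ?thesis by linarith
  qed
  then have "(\<Sum>y\<in>N - T. real d - \<gamma> * t) \<le> (\<Sum>y\<in>N - T. real (deg_in E R y))"
    by (rule sum_mono)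
  then have from_N: "real (card (N - T)) * (real d - \<gamma> * t) \<le> real (\<Sum>y\<in>N - T. deg_in E R y)"
    by simp
  have "(\<Sum>y\<in>N. deg_in E R y) = (\<Sum>y\<in>N - T. deg_in E R y) + (\<Sum>y\<in>T. deg_in E R y)"
    by (rule sum.subset_diff[OF TN fN])
  then show ?thesis
    using from_S from_N edges_into_R by (simp add: algebra_simps)
qed

text \<open>
  For \<open>0 \<le> t \<le> L\<close>, the alternative \<open>k \<ge> t + 1\<close> would give \<open>(t + 1)(D - g t) \<le> D t\<close>,
  i.e. \<open>D \<le> g t (t + 1)\<close>.
\<close>

lemma le_int_of_deficit_bound:
  fixes D g L :: real and k :: nat and t :: int
  assumes bound: "real k * (D - g * t) \<le> D * t" and tL: "t \<le> L"
    and small: "g * L * (L + 1) < D" and g: "0 < g" and L: "0 \<le> L"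
  shows "k \<le> t"
proof -
  have "0 \<le> g * L * (L + 1)" using g L by simp
  then have D: "0 < D" using small by linarith
  show ?thesis
  proof (cases "t < 0")
    case True
    then have gt: "g * t < 0" and Dt: "D * t < 0"
      using D g by (simp_all add: mult_pos_neg)
    have "0 \<le> real k * (D - g * t)" using gt D by simp
    then show ?thesis using bound Dt by linarith
  next
    case False
    have "g * t * (t + 1) \<le> g * L * (L + 1)"
      using False tL g by (intro mult_mono mult_left_mono) auto
    then have tt: "g * t * (t + 1) < D" using small by linarith
    show ?thesis
    proof (rule ccontr)
      assume "\<not> k \<le> t"
      then have "real_of_int t + 1 \<le> real k" by linarith
      moreover have "g * t \<le> g * t * (t + 1)"
        using False g by (simp add: algebra_simps)
      then have "0 \<le> D - g * t" using tt by linarith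
      ultimately have "(real_of_int t + 1) * (D - g * t) \<le> real k * (D - g * t)"
        by (rule mult_right_mono)
      then have "(real_of_int t + 1) * (D - g * t) \<le> D * t" using bound by linarith
      then show False using tt by (simp add: algebra_simps)
    qed
  qed
qed

lemma eventually_polylog_small:
  fixes \<delta> \<gamma> :: real
  assumes "0 < \<delta>"
  shows "\<forall>\<^sub>F n in sequentially. \<gamma> * ln (real n) ^ 4 * (ln (real n) ^ 4 + 1) < \<delta> * real n - 1"
proof -
  have "\<forall>\<^sub>F x in at_top. \<gamma> * ln x ^ 4 * (ln x ^ 4 + 1) < \<delta> * x - 1"
    using assms by real_asymp
  with filterlim_real_sequentially show ?thesis
    by (rule filterlim_iff[THEN iffD1, rule_format])
qed

theorem mainTheorem12:
  fixes \<delta> \<gamma> :: real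
  assumes "0 < \<delta>" and "\<delta> < 1" and "0 < \<gamma>"
  shows "\<exists>N::nat. \<forall>n\<ge>N. \<forall>(X::nat set) Y E d w (t::int) A S T.
           bipartite_graph X Y E \<longrightarrow> card X = n \<longrightarrow> card Y = n \<longrightarrow>
           d = nat \<lfloor>\<delta> * real n\<rfloor> \<longrightarrow> regular X Y E d \<longrightarrow>
           real_of_int t \<le> (ln (real n)) ^ 4 \<longrightarrow>
           A \<in> polyfam X E w t \<longrightarrow>
           container X Y E d \<gamma> A S T \<longrightarrow>
           card S \<le> card T"
proof -
  obtain N0 where N0: "\<And>n. n \<ge> N0 \<Longrightarrow> \<gamma> * ln (real n) ^ 4 * (ln (real n) ^ 4 + 1) < \<delta> * real n - 1"
    using eventually_polylog_small[OF assms(1)] unfolding eventually_sequentially by blast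
  have "card S \<le> card T"
    if n: "N0 \<le> n" and graph: "bipartite_graph X Y E" and d: "d = nat \<lfloor>\<delta> * real n\<rfloor>"
      and reg: "regular X Y E d" and tL: "real_of_int t \<le> ln (real n) ^ 4"
      and A: "A \<in> polyfam X E w t" and cont: "container X Y E d \<gamma> A S T"
    for n X Y E d w t A S T
  proof -
    define N C where "N = nbhd E A" and "C = closure_set X E A"
    have AX: "A \<subseteq> X" and t: "real (card N) - real (card C) = real_of_int t"
      using A unfolding polyfam_def polymer_def N_def C_def by auto
    have "\<delta> * real n - 1 < real d" using d assms(1) by linarith
    then have "int (card (S - C) + card (N - T)) \<le> t"
      using container_deficit_bound[OF graph reg AX cont] N0[OF n] tL assms(3)
      by (intro le_int_of_deficit_bound[where D = "real d" and g = \<gamma> and L = "ln (real n) ^ 4"])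
         (auto simp flip: N_def C_def t)
    moreover have "C \<subseteq> S" "T \<subseteq> N" "finite S" "finite N"
      using cont bipartite_graph_finite[OF graph] nbhd_subset_other_part[OF graph AX]
      unfolding container_def Let_def N_def C_def by (auto intro: finite_subset)
    ultimately show ?thesis
      using t card_Diff_subset[of C S] card_Diff_subset[of T N] card_mono[of S C] card_mono[of N T]
      by (simp add: finite_subset)
  qed
  then show ?thesis by blast
qed

end
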